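(* Let $g:\mathbb{R}^n\to\mathbb{R}\cup\{+\infty\}$ be a proper closed convex function and let $f=f_1-f_2$, where $f_1,f_2:\mathbb{R}^n\to\mathbb{R}$ are convex differentiable functions such that $\nabla f_1$ is Lipschitz continuous with modulus $L>0$, $\nabla f_2$ is Lipschitz continuous with modulus $l\ge 0$, and $L\ge l$. Let $F=f+g$, and assume $\inf F>-\infty$ and that this infimum is attained. Let $\mathcal X=\{x:0\in\nabla f(x)+\partial g(x)\}$ be the set of stationary points, and suppose: (a) (error bound) for any $\xi\ge\inf F$ there exist $\epsilon>0$ and $\tau>0$ such that $\operatorname{dist}(x,\mathcal X)\le\tau\|\mathrm{Prox}_{\frac1L g}(x-\tfrac1L\nabla f(x))-x\|$ whenever $\|\mathrm{Prox}_{\frac1L g}(x-\tfrac1L\nabla f(x))-x\|<\epsilon$ and $F(x)\le\xi$; (b) there exists $\delta>0$ such that $\|x-y\|\ge\delta$ whenever $x,y\in\mathcal X$ and $F(x)\ne F(y)$. Let $\{x^k\}$ be generated by Algorithm 1 (described in the context) with $\sup_k\beta_k<\sqrt{L/(L+l)}$. Then: (i) $\{x^k\}$ converges $R$-linearly to a stationary point of $F$ (a point of $\mathcal X$); (ii) the sequence $\{F(x^k)\}$ is $R$-linearly convergent.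
   Context: $\partial g$ denotes the convex subdifferential; $\operatorname{dist}(x,\mathcal X)=\inf_{y\in\mathcal X}\|x-y\|$. For a proper closed convex $h$, $\mathrm{Prox}_h(v)=\arg\min_{x\in\mathbb{R}^n}\{h(x)+\tfrac12\|x-v\|^2\}$. Algorithm 1 (proximal gradient algorithm with extrapolation): choose $x^0\in\operatorname{dom} g$ and $\{\beta_k\}\subseteq[0,\sqrt{L/(L+l)}]$, set $x^{-1}=x^0$, and for $k=0,1,2,\dots$ set $y^k=x^k+\beta_k(x^k-x^{k-1})$ and $x^{k+1}=\mathrm{Prox}_{\frac1L g}\big(y^k-\tfrac1L\nabla f(y^k)\big)$. A sequence $\{x^k\}$ converges $R$-linearly to $x^*$ if $\limsup_{k\to\infty}\|x^k-x^*\|^{1/k}<1$ (similarly for real sequences). *)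

theory Defs
  imports "HOL-Analysis.Analysis" "HOL-Library.Extended_Real" "HOL-Library.Liminf_Limsup"
begin

definition ereal_epigraph :: "('a \<Rightarrow> ereal) \<Rightarrow> ('a \<times> real) set" where
  "ereal_epigraph g = {(x, t). g x \<le> ereal t}"

definition proper_fun :: "('a \<Rightarrow> ereal) \<Rightarrow> bool" where
  "proper_fun g \<longleftrightarrow> (\<forall>x. g x \<noteq> -\<infinity>) \<and> (\<exists>x. g x \<noteq> \<infinity>)"

definition convex_efun :: "('a::real_vector \<Rightarrow> ereal) \<Rightarrow> bool" where
  "convex_efun g \<longleftrightarrow> convex (ereal_epigraph g)"

definition closed_efun :: "('a::topological_space \<Rightarrow> ereal) \<Rightarrow> bool" where
  "closed_efun g \<longleftrightarrow> closed (ereal_epigraph g)"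

definition subdiff :: "('a::real_inner \<Rightarrow> ereal) \<Rightarrow> 'a \<Rightarrow> 'a set" where
  "subdiff g x = {v. g x < \<infinity> \<and> (\<forall>y. g x + ereal (v \<bullet> (y - x)) \<le> g y)}"

definition prox :: "real \<Rightarrow> ('a::real_normed_vector \<Rightarrow> ereal) \<Rightarrow> 'a \<Rightarrow> 'a" where
  "prox c h v = (SOME x. \<forall>y. ereal c * h x + ereal ((norm (x - v))\<^sup>2 / 2)
                              \<le> ereal c * h y + ereal ((norm (y - v))\<^sup>2 / 2))"

end

theory Submission
  imports Defs
begin

text \<open>Write \<open>\<Delta>\<^sub>k = x\<^sup>k - x\<^sup>k\<^sup>-\<^sup>1\<close> and \<open>H\<^sub>k = F(x\<^sup>k) + L/2 \<parallel>\<Delta>\<^sub>k\<parallel>\<^sup>2\<close>. The bound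
  \<open>\<beta>\<^sub>k \<le> b < \<surd>(L/(L+l))\<close> makes \<open>H\<close> decrease by at least \<open>c \<parallel>\<Delta>\<^sub>k\<parallel>\<^sup>2\<close> per step, so
  \<open>\<Delta>\<^sub>k \<rightarrow> 0\<close>. The error bound then controls the distance of \<open>x\<^sup>k\<close> to the stationary set by
  \<open>\<parallel>\<Delta>\<^sub>k\<parallel> + \<parallel>\<Delta>\<^sub>k\<^sub>+\<^sub>1\<parallel>\<close>, and the separation of critical values forces the nearest stationary
  points to lie eventually on a single level \<open>\<zeta>\<close>. Comparing a proximal gradient step with the
  nearest stationary point gives \<open>H\<^sub>k\<^sub>+\<^sub>1 - \<zeta> \<le> A (\<parallel>\<Delta>\<^sub>k\<parallel>\<^sup>2 + \<parallel>\<Delta>\<^sub>k\<^sub>+\<^sub>1\<parallel>\<^sup>2) \<le> A/c (H\<^sub>k - H\<^sub>k\<^sub>+\<^sub>2)\<close>,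
  hence \<open>H\<^sub>k\<^sub>+\<^sub>2 - \<zeta> \<le> q (H\<^sub>k - \<zeta>)\<close> with \<open>q < 1\<close>. So \<open>H\<^sub>k - \<zeta>\<close> decays geometrically, the
  steps are geometrically summable, \<open>x\<^sup>k\<close> converges R-linearly to a fixed point of the proximal
  gradient map, i.e. a stationary point, and \<open>F(x\<^sup>k) \<rightarrow> \<zeta>\<close> R-linearly.\<close>

section \<open>Convex and smooth functions\<close>

lemma convex_on_ge_linearization:
  fixes f :: "'a::real_inner \<Rightarrow> real"
  assumes cvx: "convex_on UNIV f" and der: "(f has_derivative (\<lambda>h. D \<bullet> h)) (at x)"
  shows "f x + D \<bullet> (y - x) \<le> f y"
proof -
  define \<phi> where "\<phi> t = f (x + t *\<^sub>R (y - x))" for t :: real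
  have "convex_on UNIV \<phi>"
  proof (rule convex_onI)
    fix t u s :: real
    assume "0 < t" "t < 1"
    moreover have "x + ((1 - t) *\<^sub>R u + t *\<^sub>R s) *\<^sub>R (y - x)
        = (1 - t) *\<^sub>R (x + u *\<^sub>R (y - x)) + t *\<^sub>R (x + s *\<^sub>R (y - x))"
      by (simp add: algebra_simps)
    ultimately show "\<phi> ((1 - t) *\<^sub>R u + t *\<^sub>R s) \<le> (1 - t) * \<phi> u + t * \<phi> s"
      unfolding \<phi>_def using convex_onD[OF cvx, of t] by auto
  qed simp
  moreover have "(\<phi> has_real_derivative D \<bullet> (y - x)) (at 0)"
  proof -
    have "((\<lambda>t. x + t *\<^sub>R (y - x)) has_derivative (\<lambda>t. t *\<^sub>R (y - x))) (at 0)"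
      by (auto intro!: derivative_eq_intros)
    moreover have "(f has_derivative (\<lambda>h. D \<bullet> h)) (at (x + 0 *\<^sub>R (y - x)))" using der by simp
    ultimately show ?thesis unfolding \<phi>_def
      by (auto dest: has_derivative_compose simp: has_field_derivative_def mult_commute_abs)
  qed
  ultimately have "(D \<bullet> (y - x)) * (1 - 0) \<le> \<phi> 1 - \<phi> 0"
    by (intro convex_on_imp_above_tangent) auto
  then show ?thesis by (simp add: \<phi>_def)
qed

lemma lipschitz_gradient_le_linearization:
  fixes f :: "'a::real_inner \<Rightarrow> real"
  assumes der: "\<And>z. (f has_derivative (\<lambda>h. df z \<bullet> h)) (at z)"
    and lip: "\<And>u v. norm (df u - df v) \<le> L * norm (u - v)"
  shows "f y \<le> f x + df x \<bullet> (y - x) + L / 2 * (norm (y - x))\<^sup>2"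
proof -
  define h where "h = y - x"
  define \<psi> where "\<psi> t = f (x + t *\<^sub>R h) - t * (df x \<bullet> h) - L / 2 * t\<^sup>2 * (norm h)\<^sup>2" for t :: real
  define \<psi>' where "\<psi>' t = df (x + t *\<^sub>R h) \<bullet> h - df x \<bullet> h - L * t * (norm h)\<^sup>2" for t :: real
  have "(\<psi> has_real_derivative \<psi>' t) (at t)" for t
  proof -
    have "((\<lambda>t. x + t *\<^sub>R h) has_derivative (\<lambda>s. s *\<^sub>R h)) (at t)"
      by (auto intro!: derivative_eq_intros)
    from has_derivative_compose[OF this der]
    have f_der: "((\<lambda>t. f (x + t *\<^sub>R h)) has_real_derivative (df (x + t *\<^sub>R h) \<bullet> h)) (at t)"
      by (simp add: has_field_derivative_def mult_commute_abs)
    show ?thesis unfolding \<psi>_def \<psi>'_def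
      by (rule f_der derivative_eq_intros refl | simp)+
  qed
  moreover have nonpos: "\<psi>' t \<le> 0" if "t \<ge> 0" for t
  proof -
    have "df (x + t *\<^sub>R h) \<bullet> h - df x \<bullet> h = (df (x + t *\<^sub>R h) - df x) \<bullet> h"
      by (simp add: inner_diff_left)
    also have "\<dots> \<le> norm (df (x + t *\<^sub>R h) - df x) * norm h" by (rule norm_cauchy_schwarz)
    also have "\<dots> \<le> L * norm (t *\<^sub>R h) * norm h"
      using lip[of "x + t *\<^sub>R h" x] by (simp add: mult_right_mono)
    also have "\<dots> = L * t * (norm h)\<^sup>2" using that by (simp add: power2_eq_square)
    finally show ?thesis unfolding \<psi>'_def by simp
  qed
  ultimately obtain t where "0 < t" "\<psi> 1 - \<psi> 0 = \<psi>' t"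
    using MVT2[of 0 1 \<psi> \<psi>'] by auto
  then have "\<psi> 1 \<le> \<psi> 0" using nonpos[of t] by simp
  then show ?thesis unfolding \<psi>_def h_def by simp
qed

lemma power2_norm_add:
  fixes a b :: "'a::real_inner"
  shows "(norm (a + b))\<^sup>2 = (norm a)\<^sup>2 + 2 * (a \<bullet> b) + (norm b)\<^sup>2"
  by (simp add: power2_norm_eq_inner inner_add_left inner_add_right inner_commute)

lemma power2_add_le: "(a + c)\<^sup>2 \<le> 2 * a\<^sup>2 + 2 * c\<^sup>2" for a c :: real
  using zero_le_power2[of "a - c"] by (simp add: power2_diff power2_sum)

section \<open>R-linear convergence of sequences\<close>

lemma eventually_le_geometric_imp_le_geometric:
  fixes a :: "nat \<Rightarrow> real"
  assumes s: "0 < s" and ev: "\<And>k. k \<ge> K \<Longrightarrow> a k \<le> C * s ^ k"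
  shows "\<exists>C'. \<forall>k. a k \<le> C' * s ^ k"
proof -
  define C' where "C' = max C (Max ((\<lambda>k. a k / s ^ k) ` {..<K}))"
  have "a k \<le> C' * s ^ k" for k
  proof (cases "k \<ge> K")
    case True
    then have "a k \<le> C * s ^ k" by (rule ev)
    also have "\<dots> \<le> C' * s ^ k" unfolding C'_def using s by (intro mult_right_mono) auto
    finally show ?thesis .
  next
    case False
    then have "a k / s ^ k \<le> C'" unfolding C'_def by (intro max.coboundedI2 Max_ge) auto
    then show ?thesis using s by (simp add: divide_le_eq)
  qed
  then show ?thesis by blast
qed

lemma two_step_contraction_imp_le_geometric:
  fixes r :: "nat \<Rightarrow> real"
  assumes q: "0 < q" "q < 1" and dec: "decseq r" and nonneg: "\<And>k. 0 \<le> r k"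
    and contr: "\<And>k. k \<ge> K \<Longrightarrow> r (k + 2) \<le> q * r k"
  shows "\<exists>C. \<forall>k. r k \<le> C * sqrt q ^ k"
proof -
  define s where "s = sqrt q"
  have s: "0 < s" "s \<le> 1" "q = s\<^sup>2" using q unfolding s_def by auto
  have iter: "r (K + 2 * j) \<le> q ^ j * r K" for j
  proof (induction j)
    case (Suc j)
    have "r (K + 2 * Suc j) \<le> q * r (K + 2 * j)" using contr[of "K + 2 * j"] by simp
    also have "\<dots> \<le> q * (q ^ j * r K)" using Suc q by (intro mult_left_mono) auto
    finally show ?case by simp
  qed simp
  have "r k \<le> (r K / s ^ (K + 1)) * s ^ k" if "k \<ge> K" for k
  proof -
    define j where "j = (k - K) div 2"
    have "r k \<le> r (K + 2 * j)" unfolding j_def using that by (intro decseqD[OF dec]) linarith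
    also have "\<dots> \<le> s ^ (2 * j) * r K" using iter[of j] s by (simp add: power_mult)
    also have "s ^ (2 * j) \<le> s ^ k / s ^ (K + 1)"
    proof -
      have "s ^ (2 * j) \<le> s ^ (k - (K + 1))" unfolding j_def using s by (intro power_decreasing) auto
      also have "\<dots> \<le> s ^ k / s ^ (K + 1)"
      proof (cases "k = K")
        case False
        then have "s ^ k = s ^ (k - (K + 1)) * s ^ (K + 1)"
          using that by (metis le_add_diff_inverse2 power_add Suc_eq_plus1 Suc_leI le_neq_implies_less)
        then show ?thesis using s by simp
      qed (use s in \<open>simp add: field_simps\<close>)
      finally show ?thesis .
    qed
    then have "s ^ (2 * j) * r K \<le> s ^ k / s ^ (K + 1) * r K"
      using nonneg[of K] by (intro mult_right_mono) auto
    finally show ?thesis by (simp add: mult.commute)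
  qed
  from eventually_le_geometric_imp_le_geometric[OF s(1) this] show ?thesis
    unfolding s_def by blast
qed

lemma geometric_increments_imp_convergent:
  fixes x :: "nat \<Rightarrow> 'a::banach"
  assumes \<rho>: "0 \<le> \<rho>" "\<rho> < 1" and inc: "\<And>k. norm (x (Suc k) - x k) \<le> C * \<rho> ^ k"
  shows "\<exists>xlim. x \<longlonglongrightarrow> xlim \<and> (\<forall>k. norm (x k - xlim) \<le> C / (1 - \<rho>) * \<rho> ^ k)"
proof -
  define e where "e k = x (Suc k) - x k" for k
  have geom: "summable (\<lambda>j. c * \<rho> ^ j)" for c
    by (rule summable_mult[OF summable_geometric]) (use \<rho> in simp)
  have abs_sum: "summable (\<lambda>k. norm (e k))"
    using inc unfolding e_def by (intro summable_comparison_test[OF _ geom[of C]]) simp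
  then have sum: "summable e" by (rule summable_norm_cancel)
  have partial: "x k = x 0 + (\<Sum>j<k. e j)" for k
    unfolding e_def by (induction k) auto
  define xlim where "xlim = x 0 + suminf e"
  have "(\<lambda>k. x 0 + (\<Sum>j<k. e j)) \<longlonglongrightarrow> xlim"
    unfolding xlim_def using sum by (intro tendsto_add tendsto_const summable_LIMSEQ)
  moreover have "x = (\<lambda>k. x 0 + (\<Sum>j<k. e j))" by (rule ext) (rule partial)
  ultimately have "x \<longlonglongrightarrow> xlim" by simp
  moreover have "norm (x k - xlim) \<le> C / (1 - \<rho>) * \<rho> ^ k" for k
  proof -
    have tail: "summable (\<lambda>j. norm (e (j + k)))"
      using summable_ignore_initial_segment[OF abs_sum] .
    have "suminf e = (\<Sum>j<k. e j) + (\<Sum>j. e (j + k))"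
      using suminf_split_initial_segment[OF sum, of k] by simp
    then have "x k - xlim = - (\<Sum>j. e (j + k))" unfolding xlim_def partial[of k] by simp
    then have "norm (x k - xlim) \<le> (\<Sum>j. norm (e (j + k)))"
      using summable_norm[OF tail] by simp
    also have "\<dots> \<le> (\<Sum>j. C * \<rho> ^ k * \<rho> ^ j)"
    proof (rule suminf_le[OF _ tail geom[of "C * \<rho> ^ k"]])
      show "norm (e (j + k)) \<le> C * \<rho> ^ k * \<rho> ^ j" for j
        using inc[of "j + k"] unfolding e_def by (simp add: power_add mult_ac)
    qed
    also have "\<dots> = C / (1 - \<rho>) * \<rho> ^ k"
      using \<rho> by (subst suminf_mult) (auto simp: suminf_geometric)
    finally show ?thesis .
  qed
  ultimately show ?thesis by blast
qed

lemma le_geometric_imp_limsup_root_less_1: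
  fixes a :: "nat \<Rightarrow> real"
  assumes nonneg: "\<And>k. 0 \<le> a k" and le: "\<And>k. a k \<le> C * \<rho> ^ k" and \<rho>: "0 < \<rho>" "\<rho> < 1"
  shows "limsup (\<lambda>k. ereal (root k (a k))) < 1"
proof -
  define C' where "C' = max C 1"
  have "eventually (\<lambda>k. ereal (root k (a k)) \<le> ereal (root k C' * \<rho>)) sequentially"
    using eventually_gt_at_top[of 0]
  proof eventually_elim
    case (elim k)
    have "C * \<rho> ^ k \<le> C' * \<rho> ^ k" using \<rho> unfolding C'_def by (intro mult_right_mono) auto
    then have "a k \<le> C' * \<rho> ^ k" using le[of k] by linarith
    then have "root k (a k) \<le> root k (C' * \<rho> ^ k)" using elim by (simp add: real_root_le_iff)
    also have "\<dots> = root k C' * \<rho>" using elim \<rho> by (simp add: real_root_mult real_root_power_cancel)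
    finally show ?case by simp
  qed
  then have "limsup (\<lambda>k. ereal (root k (a k))) \<le> limsup (\<lambda>k. ereal (root k C' * \<rho>))"
    by (rule Limsup_mono)
  also have "limsup (\<lambda>k. ereal (root k C' * \<rho>)) = ereal (1 * \<rho>)"
    unfolding C'_def by (intro lim_imp_Limsup tendsto_ereal tendsto_mult LIMSEQ_root_const tendsto_const) auto
  finally show ?thesis using \<rho> by (simp add: le_less_trans)
qed

section \<open>Extended-valued convex functions and the proximal map\<close>

lemma closed_bounded_sublevels_attains_min:
  fixes \<phi> :: "'a::heine_borel \<Rightarrow> real"
  assumes closed: "\<And>t. closed {z\<in>D. \<phi> z \<le> t}" and bounded: "\<And>t. bounded {z\<in>D. \<phi> z \<le> t}"
    and "D \<noteq> {}"
  shows "\<exists>p\<in>D. \<forall>y\<in>D. \<phi> p \<le> \<phi> y"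
proof -
  define S where "S t = {z\<in>D. \<phi> z \<le> t}" for t
  obtain z0 where "z0 \<in> D" using \<open>D \<noteq> {}\<close> by blast
  define t0 where "t0 = \<phi> z0"
  define I where "I = {t. t \<le> t0 \<and> S t \<noteq> {}}"
  have "t0 \<in> I" using \<open>z0 \<in> D\<close> unfolding I_def S_def t0_def by blast
  have "\<Inter> (S ` I) \<noteq> {}"
  proof (rule closed_fip_Heine_Borel)
    show "S t0 \<in> S ` I" using \<open>t0 \<in> I\<close> by (rule imageI)
    show "bounded (S t0)" unfolding S_def by (rule bounded)
    show "closed T" if "T \<in> S ` I" for T using that by (auto simp: S_def closed)
  next
    fix \<F> assume "finite \<F>" "\<F> \<subseteq> S ` I"
    then obtain E where E: "E \<subseteq> I" "finite E" "\<F> = S ` E" by (meson finite_subset_image)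
    show "\<Inter> \<F> \<noteq> {}"
    proof (cases "E = {}")
      case False
      have "S (Min E) \<subseteq> S t" if "t \<in> E" for t
        using E(2) that unfolding S_def by (auto intro: order_trans[OF _ Min_le])
      then have "S (Min E) \<subseteq> \<Inter> \<F>" using E(3) by auto
      moreover have "Min E \<in> I" using E(1) Min_in[OF E(2) False] by blast
      then have "S (Min E) \<noteq> {}" unfolding I_def by blast
      ultimately show ?thesis by blast
    qed (use E in simp)
  qed
  then obtain p where p: "\<And>t. t \<in> I \<Longrightarrow> p \<in> S t" by blast
  from p[OF \<open>t0 \<in> I\<close>] have "p \<in> S t0" .
  then have "p \<in> D" "\<phi> p \<le> t0" unfolding S_def by simp_all
  moreover have "\<forall>y\<in>D. \<phi> p \<le> \<phi> y"
  proof
    fix y assume "y \<in> D"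
    show "\<phi> p \<le> \<phi> y"
    proof (cases "\<phi> y \<le> t0")
      case True
      then have "\<phi> y \<in> I" using \<open>y \<in> D\<close> unfolding I_def S_def by blast
      from p[OF this] show ?thesis unfolding S_def by simp
    qed (use \<open>\<phi> p \<le> t0\<close> in linarith)
  qed
  ultimately show ?thesis by blast
qed

locale proper_convex_efun =
  fixes g :: "'a::real_normed_vector \<Rightarrow> ereal"
  assumes proper: "proper_fun g" and convex: "convex_efun g"
begin

text \<open>Outside the effective domain \<open>greal\<close> is the junk value \<open>real_of_ereal \<infinity> = 0\<close>.\<close>

definition greal :: "'a \<Rightarrow> real" where
  "greal z = real_of_ereal (g z)"

lemma ereal_greal: "g z < \<infinity> \<Longrightarrow> g z = ereal (greal z)"
  using proper unfolding proper_fun_def greal_def by (cases "g z") auto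

lemma dom_nonempty: "\<exists>p. g p < \<infinity>"
  using proper unfolding proper_fun_def by (simp add: less_PInf_Ex_of_nat)

lemma convex_combination_le:
  assumes "g a < \<infinity>" "g b < \<infinity>" "0 \<le> t" "t \<le> 1"
  shows "g ((1 - t) *\<^sub>R a + t *\<^sub>R b) \<le> ereal ((1 - t) * greal a + t * greal b)"
proof -
  have "(a, greal a) \<in> ereal_epigraph g" "(b, greal b) \<in> ereal_epigraph g"
    using ereal_greal assms unfolding ereal_epigraph_def by auto
  then have "(1 - t) *\<^sub>R (a, greal a) + t *\<^sub>R (b, greal b) \<in> ereal_epigraph g"
    using convex assms unfolding convex_efun_def by (intro convexD) auto
  then show ?thesis unfolding ereal_epigraph_def by (simp add: scaleR_Pair)
qed

lemma convex_combination_in_dom: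
  assumes "g a < \<infinity>" "g b < \<infinity>" "0 \<le> t" "t \<le> 1"
  shows "g ((1 - t) *\<^sub>R a + t *\<^sub>R b) < \<infinity>"
  using convex_combination_le[OF assms] by (rule le_less_trans) simp

lemma norm_minorant_of_ball_bound:
  assumes p: "g p < \<infinity>" and ball: "\<And>z. g z < \<infinity> \<Longrightarrow> norm (z - p) \<le> 1 \<Longrightarrow> M \<le> greal z"
  shows "\<exists>K. \<forall>z. g z < \<infinity> \<longrightarrow> M - K * norm (z - p) \<le> greal z"
proof -
  have M_le_p: "M \<le> greal p" using ball[OF p] by simp
  define K where "K = greal p - M"
  have "M - K * norm (z - p) \<le> greal z" if z: "g z < \<infinity>" for z
  proof (cases "norm (z - p) \<le> 1")
    case True
    moreover have "0 \<le> K * norm (z - p)" using M_le_p unfolding K_def by simp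
    ultimately show ?thesis using ball[OF z] by linarith
  next
    case False
    define r where "r = norm (z - p)"
    have r: "r > 1" using False r_def by simp
    define w where "w = (1 - 1 / r) *\<^sub>R p + (1 / r) *\<^sub>R z"
    have t: "0 \<le> 1 / r" "1 / r \<le> 1" using r by auto
    have "w - p = (1 / r) *\<^sub>R (z - p)" unfolding w_def by (simp add: algebra_simps)
    moreover have "z \<noteq> p" using r unfolding r_def by auto
    ultimately have "norm (w - p) = 1" unfolding r_def by simp
    then have "M \<le> greal w"
      using ball convex_combination_in_dom[OF p z t] unfolding w_def by simp
    also have "greal w \<le> (1 - 1 / r) * greal p + 1 / r * greal z"
      using convex_combination_le[OF p z t] ereal_greal[OF convex_combination_in_dom[OF p z t]]
      unfolding w_def by simp
    finally have "r * M \<le> (r - 1) * greal p + greal z"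
      using r by (simp add: field_simps)
    moreover have "M - K * r = M - r * greal p + r * M" unfolding K_def by (simp add: algebra_simps)
    moreover have "(r - 1) * greal p = r * greal p - greal p" by (simp add: algebra_simps)
    ultimately show ?thesis using M_le_p unfolding r_def by linarith
  qed
  then show ?thesis by blast
qed

end

text \<open>The norm minorant assumed below exists for every proper closed convex function (which even has
  an affine minorant); it is an assumption here because in the application it follows directly
  from the lower bound of the objective.\<close>

locale closed_convex_efun = proper_convex_efun g for g :: "'a::euclidean_space \<Rightarrow> ereal" +
  assumes closed: "closed_efun g"
    and norm_minorant: "\<exists>M K. \<forall>z. ereal (M - K * norm z) \<le> g z"
begin

definition prox_obj :: "real \<Rightarrow> 'a \<Rightarrow> 'a \<Rightarrow> real" where
  "prox_obj c v z = c * greal z + (norm (z - v))\<^sup>2 / 2"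

lemma closed_prox_sublevel:
  assumes "c > 0"
  shows "closed {z. g z < \<infinity> \<and> prox_obj c v z \<le> t}"
proof -
  have "g z < \<infinity> \<and> prox_obj c v z \<le> t \<longleftrightarrow> g z \<le> ereal ((t - (norm (z - v))\<^sup>2 / 2) / c)"
    for z
  proof
    assume "g z < \<infinity> \<and> prox_obj c v z \<le> t"
    then show "g z \<le> ereal ((t - (norm (z - v))\<^sup>2 / 2) / c)"
      using ereal_greal[of z] assms by (simp add: prox_obj_def field_simps)
  next
    assume le: "g z \<le> ereal ((t - (norm (z - v))\<^sup>2 / 2) / c)"
    then have "g z < \<infinity>" by (rule le_less_trans) simp
    then show "g z < \<infinity> \<and> prox_obj c v z \<le> t"
      using le ereal_greal[of z] assms by (simp add: prox_obj_def field_simps)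
  qed
  then have "{z. g z < \<infinity> \<and> prox_obj c v z \<le> t}
      = (\<lambda>z. (z, (t - (norm (z - v))\<^sup>2 / 2) / c)) -` ereal_epigraph g"
    by (auto simp: ereal_epigraph_def)
  also have "closed \<dots>"
    using closed assms unfolding closed_efun_def
    by (intro continuous_closed_vimage) (auto intro!: continuous_intros)
  finally show ?thesis .
qed

lemma bounded_prox_sublevel:
  assumes "c > 0"
  shows "bounded {z. g z < \<infinity> \<and> prox_obj c v z \<le> t}"
proof -
  obtain M K where MK: "\<And>z. ereal (M - K * norm z) \<le> g z" using norm_minorant by blast
  define a where "a = t - c * M + c * \<bar>K\<bar> * norm v"
  define R where "R = 2 * (c * \<bar>K\<bar>) + 2 * \<bar>a\<bar> + 2"
  have "0 \<le> c * \<bar>K\<bar>" using \<open>c > 0\<close> by simp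
  have "norm (z - v) \<le> R" if z: "g z < \<infinity>" "prox_obj c v z \<le> t" for z
  proof (rule ccontr)
    define r where "r = norm (z - v)"
    assume "\<not> norm (z - v) \<le> R"
    then have r_big: "r \<ge> 1" "r / 2 - c * \<bar>K\<bar> \<ge> \<bar>a\<bar> + 1"
      using \<open>0 \<le> c * \<bar>K\<bar>\<close> unfolding r_def R_def by linarith+
    have "M - \<bar>K\<bar> * (r + norm v) \<le> greal z"
    proof -
      have "K * norm z \<le> \<bar>K\<bar> * norm z" by (rule mult_right_mono) simp_all
      also have "\<dots> \<le> \<bar>K\<bar> * (r + norm v)"
        unfolding r_def using norm_triangle_sub[of z v] by (intro mult_left_mono) auto
      finally show ?thesis using MK[of z] ereal_greal[OF z(1)] by simp
    qed
    then have "c * (M - \<bar>K\<bar> * (r + norm v)) \<le> c * greal z"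
      using \<open>c > 0\<close> by (intro mult_left_mono) auto
    then have "c * (M - \<bar>K\<bar> * (r + norm v)) + r\<^sup>2 / 2 \<le> t"
      using z(2) unfolding prox_obj_def r_def by linarith
    moreover have "c * (M - \<bar>K\<bar> * (r + norm v)) = c * M - c * \<bar>K\<bar> * r - c * \<bar>K\<bar> * norm v"
      "r * (r / 2 - c * \<bar>K\<bar>) = r\<^sup>2 / 2 - c * \<bar>K\<bar> * r"
      by (simp_all add: algebra_simps power2_eq_square)
    ultimately have "r * (r / 2 - c * \<bar>K\<bar>) \<le> a"
      unfolding a_def by linarith
    moreover have "1 * (\<bar>a\<bar> + 1) \<le> r * (r / 2 - c * \<bar>K\<bar>)"
      using r_big by (intro mult_mono) auto
    ultimately show False by simp
  qed
  then have "{z. g z < \<infinity> \<and> prox_obj c v z \<le> t} \<subseteq> cball v R"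
    by (auto simp: dist_norm norm_minus_commute[of v])
  then show ?thesis by (rule bounded_subset[OF bounded_cball])
qed

lemma prox_obj_attains_min:
  assumes "c > 0"
  shows "\<exists>p. g p < \<infinity> \<and> (\<forall>y. g y < \<infinity> \<longrightarrow> prox_obj c v p \<le> prox_obj c v y)"
proof -
  have "\<exists>p\<in>{z. g z < \<infinity>}. \<forall>y\<in>{z. g z < \<infinity>}. prox_obj c v p \<le> prox_obj c v y"
    using closed_prox_sublevel[OF assms] bounded_prox_sublevel[OF assms] dom_nonempty
    by (intro closed_bounded_sublevels_attains_min) simp_all
  then show ?thesis by blast
qed

lemma
  assumes "c > 0"
  shows prox_in_dom: "g (prox c g v) < \<infinity>"
    and prox_minimal: "g y < \<infinity> \<Longrightarrow> prox_obj c v (prox c g v) \<le> prox_obj c v y"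
proof -
  have obj: "ereal c * g z + ereal ((norm (z - v))\<^sup>2 / 2)
      = (if g z < \<infinity> then ereal (prox_obj c v z) else \<infinity>)" for z
    using assms ereal_greal[of z] by (auto simp: prox_obj_def ereal_mult_infty)
  obtain p where "g p < \<infinity>" "\<And>y. g y < \<infinity> \<Longrightarrow> prox_obj c v p \<le> prox_obj c v y"
    using prox_obj_attains_min[OF assms] by blast
  then have "\<forall>y. ereal c * g p + ereal ((norm (p - v))\<^sup>2 / 2)
      \<le> ereal c * g y + ereal ((norm (y - v))\<^sup>2 / 2)"
    unfolding obj by simp
  then have "\<forall>y. ereal c * g (prox c g v) + ereal ((norm (prox c g v - v))\<^sup>2 / 2)
      \<le> ereal c * g y + ereal ((norm (y - v))\<^sup>2 / 2)"
    unfolding prox_def by (rule someI)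
  then have min: "\<And>y. (if g (prox c g v) < \<infinity> then ereal (prox_obj c v (prox c g v)) else \<infinity>)
      \<le> (if g y < \<infinity> then ereal (prox_obj c v y) else \<infinity>)"
    unfolding obj by blast
  show "g (prox c g v) < \<infinity>"
    using min[of p] \<open>g p < \<infinity>\<close> by (auto split: if_splits)
  then show "g y < \<infinity> \<Longrightarrow> prox_obj c v (prox c g v) \<le> prox_obj c v y"
    using min[of y] by simp
qed

lemma prox_variational_ineq:
  assumes c: "c > 0" and z: "g z < \<infinity>"
  shows "(v - prox c g v) \<bullet> (z - prox c g v) \<le> c * (greal z - greal (prox c g v))"
proof (rule ccontr)
  define p where "p = prox c g v"
  define w where "w = z - p"
  define Q where "Q = c * (greal z - greal p) - (v - p) \<bullet> w"
  assume "\<not> ?thesis"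
  then have "Q < 0" unfolding Q_def p_def w_def by simp
  then have "w \<noteq> 0" unfolding Q_def w_def by auto
  define t where "t = min 1 (- Q / (norm w)\<^sup>2)"
  have t: "0 < t" "t \<le> 1" "t * (norm w)\<^sup>2 \<le> - Q"
    using \<open>Q < 0\<close> \<open>w \<noteq> 0\<close> unfolding t_def by (auto simp: min_def field_simps)
  have p: "g p < \<infinity>" unfolding p_def using c by (rule prox_in_dom)
  define zt where "zt = (1 - t) *\<^sub>R p + t *\<^sub>R z"
  have zt: "g zt < \<infinity>" unfolding zt_def using p z t by (intro convex_combination_in_dom) auto
  have "greal zt \<le> (1 - t) * greal p + t * greal z"
    using convex_combination_le[OF p z, of t] t ereal_greal[OF zt] unfolding zt_def by simp
  then have "c * greal zt \<le> c * ((1 - t) * greal p + t * greal z)"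
    using c by (intro mult_left_mono) auto
  also have "\<dots> = c * greal p + c * t * (greal z - greal p)" by (simp add: algebra_simps)
  finally have "c * greal zt \<le> c * greal p + c * t * (greal z - greal p)" .
  moreover have "(norm (zt - v))\<^sup>2 = (norm (p - v))\<^sup>2 + 2 * t * ((p - v) \<bullet> w) + t\<^sup>2 * (norm w)\<^sup>2"
  proof -
    have "zt - v = (p - v) + t *\<^sub>R w" unfolding zt_def w_def by (simp add: algebra_simps)
    then have "(norm (zt - v))\<^sup>2 = (norm (p - v))\<^sup>2 + 2 * ((p - v) \<bullet> (t *\<^sub>R w)) + (norm (t *\<^sub>R w))\<^sup>2"
      by (simp only: power2_norm_add)
    then show ?thesis by (simp add: power_mult_distrib)
  qed
  moreover have "prox_obj c v p \<le> prox_obj c v zt" unfolding p_def using c zt by (rule prox_minimal)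
  ultimately have "0 \<le> c * t * (greal z - greal p) + t * ((p - v) \<bullet> w) + t\<^sup>2 * (norm w)\<^sup>2 / 2"
    unfolding prox_obj_def by linarith
  also have "\<dots> = t * (Q + t * (norm w)\<^sup>2 / 2)"
    unfolding Q_def by (simp add: algebra_simps inner_diff_left power2_eq_square)
  finally have "0 \<le> Q + t * (norm w)\<^sup>2 / 2" using t by (simp add: zero_le_mult_iff)
  then show False using t \<open>Q < 0\<close> by linarith
qed

lemma prox_nonexpansive:
  assumes "c > 0"
  shows "norm (prox c g u - prox c g v) \<le> norm (u - v)"
proof -
  define p q where "p = prox c g u" and "q = prox c g v"
  have "(u - p) \<bullet> (q - p) + (v - q) \<bullet> (p - q) \<le> 0"
    using prox_variational_ineq[OF assms prox_in_dom[OF assms], of u v]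
      prox_variational_ineq[OF assms prox_in_dom[OF assms], of v u]
    unfolding p_def q_def by (simp add: algebra_simps)
  moreover have "(u - p) \<bullet> (q - p) + (v - q) \<bullet> (p - q) = (norm (p - q))\<^sup>2 - (u - v) \<bullet> (p - q)"
    by (simp add: power2_norm_eq_inner inner_diff_left inner_diff_right inner_commute algebra_simps)
  ultimately have "norm (p - q) * norm (p - q) \<le> norm (u - v) * norm (p - q)"
    using norm_cauchy_schwarz[of "u - v" "p - q"] by (simp add: power2_eq_square)
  then show ?thesis
    unfolding p_def q_def by (cases "p = q") (simp_all add: p_def q_def mult_le_cancel_right)
qed

lemma prox_eq_iff_subgradient:
  assumes c: "c > 0"
  shows "prox c g v = p \<longleftrightarrow> (1 / c) *\<^sub>R (v - p) \<in> subdiff g p"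
proof
  assume p: "prox c g v = p"
  have "g p + ereal (((1 / c) *\<^sub>R (v - p)) \<bullet> (y - p)) \<le> g y" for y
  proof (cases "g y < \<infinity>")
    case True
    have "(v - p) \<bullet> (y - p) \<le> c * (greal y - greal p)"
      using prox_variational_ineq[OF c True, of v] p by simp
    then have "((1 / c) *\<^sub>R (v - p)) \<bullet> (y - p) \<le> greal y - greal p"
      using c by (simp add: pos_divide_le_eq mult.commute)
    then show ?thesis
      using ereal_greal[OF True] ereal_greal[of p] prox_in_dom[OF c, of v] p by simp
  qed simp
  then show "(1 / c) *\<^sub>R (v - p) \<in> subdiff g p"
    unfolding subdiff_def using prox_in_dom[OF c, of v] p by simp
next
  assume "(1 / c) *\<^sub>R (v - p) \<in> subdiff g p"
  then have p: "g p < \<infinity>" and sub: "\<And>y. g p + ereal (((1 / c) *\<^sub>R (v - p)) \<bullet> (y - p)) \<le> g y"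
    unfolding subdiff_def by auto
  define q where "q = prox c g v"
  have q: "g q < \<infinity>" unfolding q_def using c by (rule prox_in_dom)
  have "((1 / c) *\<^sub>R (v - p)) \<bullet> (q - p) \<le> greal q - greal p"
    using sub[of q] ereal_greal[OF p] ereal_greal[OF q] by simp
  then have "(v - p) \<bullet> (q - p) \<le> c * (greal q - greal p)"
    using c by (simp add: pos_divide_le_eq mult.commute)
  moreover have "(v - q) \<bullet> (p - q) \<le> c * (greal p - greal q)"
    unfolding q_def using c p by (rule prox_variational_ineq)
  ultimately have "(v - p) \<bullet> (q - p) + (v - q) \<bullet> (p - q) \<le> 0"
    by (simp add: algebra_simps)
  moreover have "(v - p) \<bullet> (q - p) + (v - q) \<bullet> (p - q) = (norm (p - q))\<^sup>2"
    by (simp add: power2_norm_eq_inner inner_diff_left inner_diff_right inner_commute algebra_simps)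
  ultimately show "prox c g v = p" unfolding q_def by simp
qed

end

section \<open>The difference-of-convex composite problem\<close>

locale dc_composite =
  fixes g :: "'a::euclidean_space \<Rightarrow> ereal"
    and f1 f2 :: "'a \<Rightarrow> real"
    and df1 df2 :: "'a \<Rightarrow> 'a"
    and L l m :: real
  assumes g_proper: "proper_fun g" and g_closed: "closed_efun g" and g_convex: "convex_efun g"
    and f1_convex: "convex_on UNIV f1" and f2_convex: "convex_on UNIV f2"
    and f1_grad: "\<And>z. (f1 has_derivative (\<lambda>h. df1 z \<bullet> h)) (at z)"
    and f2_grad: "\<And>z. (f2 has_derivative (\<lambda>h. df2 z \<bullet> h)) (at z)"
    and L_pos: "L > 0" and l_nonneg: "l \<ge> 0" and L_ge_l: "L \<ge> l"
    and f1_lip: "\<And>u v. norm (df1 u - df1 v) \<le> L * norm (u - v)"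
    and f2_lip: "\<And>u v. norm (df2 u - df2 v) \<le> l * norm (u - v)"
    and bounded_below: "\<And>z. ereal m \<le> ereal (f1 z - f2 z) + g z"
begin

sublocale proper_convex_efun g
  using g_proper g_convex by unfold_locales

definition f :: "'a \<Rightarrow> real" where
  "f z = f1 z - f2 z"

definition grad_f :: "'a \<Rightarrow> 'a" where
  "grad_f z = df1 z - df2 z"

definition obj :: "'a \<Rightarrow> real" where
  "obj z = f z + greal z"

definition prox_grad :: "'a \<Rightarrow> 'a" where
  "prox_grad z = prox (1 / L) g (z - (1 / L) *\<^sub>R grad_f z)"

definition stationary :: "'a set" where
  "stationary = {z. - grad_f z \<in> subdiff g z}"

lemma f_le_linearization: "f y \<le> f x + grad_f x \<bullet> (y - x) + L / 2 * (norm (y - x))\<^sup>2"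
  using lipschitz_gradient_le_linearization[OF f1_grad f1_lip, of y x]
    convex_on_ge_linearization[OF f2_convex f2_grad, of x y]
  unfolding f_def grad_f_def by (simp add: inner_diff_left)

lemma linearization_le_f: "f x + grad_f x \<bullet> (y - x) - l / 2 * (norm (y - x))\<^sup>2 \<le> f y"
  using lipschitz_gradient_le_linearization[OF f2_grad f2_lip, of y x]
    convex_on_ge_linearization[OF f1_convex f1_grad, of x y]
  unfolding f_def grad_f_def by (simp add: inner_diff_left)

lemma grad_f_lipschitz: "norm (grad_f u - grad_f v) \<le> (L + l) * norm (u - v)"
proof -
  have "grad_f u - grad_f v = (df1 u - df1 v) - (df2 u - df2 v)"
    unfolding grad_f_def by (simp add: algebra_simps)
  then have "norm (grad_f u - grad_f v) \<le> norm (df1 u - df1 v) + norm (df2 u - df2 v)"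
    by (metis norm_triangle_ineq4)
  then show ?thesis using f1_lip[of u v] f2_lip[of u v] by (simp add: algebra_simps)
qed

lemma ereal_obj: "g z < \<infinity> \<Longrightarrow> ereal (f1 z - f2 z) + g z = ereal (obj z)"
  using ereal_greal[of z] unfolding obj_def f_def by simp

lemma obj_ge: "g z < \<infinity> \<Longrightarrow> m \<le> obj z"
  using bounded_below[of z] ereal_obj[of z] by simp

text \<open>The quadratic upper bound on f turns the lower bound m of the objective into a lower
  bound of g on every ball; convexity then yields a minorant of g that decreases only linearly.\<close>

sublocale closed_convex_efun g
proof unfold_locales
  show "closed_efun g" by (rule g_closed)
  obtain p where p: "g p < \<infinity>" using dom_nonempty by blast
  define M where "M = m - f 0 - norm (grad_f 0) * (norm p + 1) - L / 2 * (norm p + 1)\<^sup>2"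
  have "M \<le> greal z" if z: "g z < \<infinity>" "norm (z - p) \<le> 1" for z
  proof -
    have nz: "norm z \<le> norm p + 1" using z(2) norm_triangle_ineq2[of z p] by simp
    have "m \<le> f z + greal z" using obj_ge[OF z(1)] unfolding obj_def .
    moreover have "f z \<le> f 0 + grad_f 0 \<bullet> z + L / 2 * (norm z)\<^sup>2"
      using f_le_linearization[of z 0] by simp
    moreover have "grad_f 0 \<bullet> z \<le> norm (grad_f 0) * (norm p + 1)"
      using norm_cauchy_schwarz[of "grad_f 0" z] mult_left_mono[OF nz norm_ge_zero[of "grad_f 0"]] by linarith
    moreover have "L / 2 * (norm z)\<^sup>2 \<le> L / 2 * (norm p + 1)\<^sup>2"
      using nz L_pos by (intro mult_left_mono power_mono) auto
    ultimately show ?thesis unfolding M_def by linarith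
  qed
  then obtain K where K: "\<And>z. g z < \<infinity> \<Longrightarrow> M - K * norm (z - p) \<le> greal z"
    using norm_minorant_of_ball_bound[OF p] by blast
  have "ereal (M - \<bar>K\<bar> * norm p - \<bar>K\<bar> * norm z) \<le> g z" for z
  proof (cases "g z < \<infinity>")
    case True
    have "K * norm (z - p) \<le> \<bar>K\<bar> * norm (z - p)" by (rule mult_right_mono) simp_all
    also have "\<dots> \<le> \<bar>K\<bar> * (norm z + norm p)"
      using norm_triangle_ineq4[of z p] by (intro mult_left_mono) simp_all
    finally have "K * norm (z - p) \<le> \<bar>K\<bar> * (norm z + norm p)" .
    then show ?thesis using K[OF True] ereal_greal[OF True] by (simp add: algebra_simps)
  qed simp
  then show "\<exists>M K. \<forall>z. ereal (M - K * norm z) \<le> g z" by blast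
qed

lemma prox_grad_in_dom: "g (prox_grad z) < \<infinity>"
  unfolding prox_grad_def using L_pos by (intro prox_in_dom) simp

lemma stationary_in_dom: "z \<in> stationary \<Longrightarrow> g z < \<infinity>"
  unfolding stationary_def subdiff_def by simp

lemma stationary_iff_fixed_point: "z \<in> stationary \<longleftrightarrow> prox_grad z = z"
  using prox_eq_iff_subgradient[of "1 / L" "z - (1 / L) *\<^sub>R grad_f z" z] L_pos
  unfolding stationary_def prox_grad_def by simp

lemma prox_grad_lipschitz: "norm (prox_grad u - prox_grad v) \<le> 3 * norm (u - v)"
proof -
  have "norm (prox_grad u - prox_grad v)
      \<le> norm ((u - (1 / L) *\<^sub>R grad_f u) - (v - (1 / L) *\<^sub>R grad_f v))"
    unfolding prox_grad_def using L_pos by (intro prox_nonexpansive) simp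
  also have "(u - (1 / L) *\<^sub>R grad_f u) - (v - (1 / L) *\<^sub>R grad_f v)
      = (u - v) - (1 / L) *\<^sub>R (grad_f u - grad_f v)"
    by (simp add: algebra_simps)
  also have "norm \<dots> \<le> norm (u - v) + norm ((1 / L) *\<^sub>R (grad_f u - grad_f v))"
    by (rule norm_triangle_ineq4)
  also have "norm ((1 / L) *\<^sub>R (grad_f u - grad_f v)) \<le> (L + l) / L * norm (u - v)"
    using grad_f_lipschitz[of u v] L_pos by (simp add: divide_right_mono)
  also have "(L + l) / L \<le> 2" using L_pos L_ge_l by (simp add: field_simps)
  then have "(L + l) / L * norm (u - v) \<le> 2 * norm (u - v)" by (intro mult_right_mono) auto
  finally show ?thesis by simp
qed

lemma closed_stationary: "closed stationary"
proof -
  have "continuous_on UNIV prox_grad"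
    using prox_grad_lipschitz by (intro lipschitz_on_continuous_on[of 3] lipschitz_onI) (auto simp: dist_norm)
  then have "closed {z. prox_grad z = z}"
    by (intro closed_Collect_eq) (auto intro!: continuous_intros)
  moreover have "stationary = {z. prox_grad z = z}" using stationary_iff_fixed_point by auto
  ultimately show ?thesis by simp
qed

lemma obj_prox_grad_le:
  assumes z: "g z < \<infinity>"
  shows "obj (prox_grad y)
    \<le> obj z + (L + l) / 2 * (norm (z - y))\<^sup>2 - L / 2 * (norm (z - prox_grad y))\<^sup>2"
proof -
  define p where "p = prox_grad y"
  define a where "a = (z - p) \<bullet> (p - y)"
  define G where "G = grad_f y \<bullet> (z - p)"
  have "(y - (1 / L) *\<^sub>R grad_f y - p) \<bullet> (z - p) \<le> 1 / L * (greal z - greal p)"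
    unfolding p_def prox_grad_def using L_pos z by (intro prox_variational_ineq) auto
  moreover have "(y - (1 / L) *\<^sub>R grad_f y - p) \<bullet> (z - p) = - a - 1 / L * G"
    unfolding a_def G_def by (simp add: inner_diff_left inner_diff_right inner_commute algebra_simps)
  ultimately have "L * (- a - 1 / L * G) \<le> L * (1 / L * (greal z - greal p))"
    using L_pos by (intro mult_left_mono) simp_all
  then have vi: "- (L * a) - G \<le> greal z - greal p"
    using L_pos by (simp add: algebra_simps)
  have "f p \<le> f y + grad_f y \<bullet> (p - y) + L / 2 * (norm (p - y))\<^sup>2"
    by (rule f_le_linearization)
  moreover have "f y + grad_f y \<bullet> (z - y) - l / 2 * (norm (z - y))\<^sup>2 \<le> f z"
    by (rule linearization_le_f)
  moreover have "grad_f y \<bullet> (p - y) + G = grad_f y \<bullet> (z - y)"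
    unfolding G_def by (simp add: inner_diff_right)
  moreover have "(norm (z - y))\<^sup>2 = (norm (z - p))\<^sup>2 + 2 * a + (norm (p - y))\<^sup>2"
    using power2_norm_add[of "z - p" "p - y"] unfolding a_def by simp
  then have "L / 2 * (norm (z - y))\<^sup>2
      = L / 2 * (norm (z - p))\<^sup>2 + L * a + L / 2 * (norm (p - y))\<^sup>2"
    by (simp add: algebra_simps)
  moreover have "(L + l) / 2 * (norm (z - y))\<^sup>2
      = L / 2 * (norm (z - y))\<^sup>2 + l / 2 * (norm (z - y))\<^sup>2"
    by (simp add: algebra_simps)
  ultimately show ?thesis
    using vi unfolding obj_def p_def[symmetric] by linarith
qed

lemma obj_ge_at_stationary:
  assumes u: "u \<in> stationary" and x: "g x < \<infinity>"
  shows "obj u - l / 2 * (norm (x - u))\<^sup>2 \<le> obj x"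
proof -
  have "g u + ereal ((- grad_f u) \<bullet> (x - u)) \<le> g x"
    using u unfolding stationary_def subdiff_def by simp
  then have "greal u - grad_f u \<bullet> (x - u) \<le> greal x"
    using ereal_greal[OF stationary_in_dom[OF u]] ereal_greal[OF x] by simp
  then show ?thesis using linearization_le_f[of u x] unfolding obj_def by linarith
qed

lemma minimizer_stationary:
  assumes z: "g z < \<infinity>" and min: "\<And>y. g y < \<infinity> \<Longrightarrow> obj z \<le> obj y"
  shows "z \<in> stationary"
proof -
  have "obj z \<le> obj (prox_grad z)" by (rule min[OF prox_grad_in_dom])
  also have "\<dots> \<le> obj z - L / 2 * (norm (z - prox_grad z))\<^sup>2"
    using obj_prox_grad_le[OF z, of z] by simp
  finally have "L * (norm (z - prox_grad z))\<^sup>2 \<le> 0" by simp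
  then have "prox_grad z = z" using L_pos by (simp add: mult_le_0_iff)
  then show ?thesis using stationary_iff_fixed_point by simp
qed

lemma ereal_minimizer_stationary:
  assumes min: "\<And>z. ereal (f1 z0 - f2 z0) + g z0 \<le> ereal (f1 z - f2 z) + g z"
  shows "z0 \<in> stationary"
proof -
  obtain p where p: "g p < \<infinity>" using dom_nonempty by blast
  have "g z0 < \<infinity>"
    using min[of p] ereal_obj[OF p] by (cases "g z0") auto
  moreover have "obj z0 \<le> obj y" if "g y < \<infinity>" for y
    using min[of y] ereal_obj[OF \<open>g z0 < \<infinity>\<close>] ereal_obj[OF that] by simp
  ultimately show ?thesis by (rule minimizer_stationary)
qed
end

section \<open>The inertial proximal gradient iteration\<close>

locale inertial_prox_grad = dc_composite +
  fixes x :: "nat \<Rightarrow> 'a" and \<beta> :: "nat \<Rightarrow> real" and b \<epsilon> \<tau> \<delta> :: real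
  assumes x0_dom: "g (x 0) < \<infinity>"
    and beta: "\<And>k. 0 \<le> \<beta> k \<and> \<beta> k \<le> b" and b_less: "b < sqrt (L / (L + l))"
    and iter: "\<And>k. x (Suc k) = prox_grad (x k + \<beta> k *\<^sub>R (x k - x (k - 1)))"
    and eps: "\<epsilon> > 0" and tau: "\<tau> > 0"
    and error_bound: "\<And>z. norm (prox_grad z - z) < \<epsilon> \<Longrightarrow> g z < \<infinity> \<Longrightarrow> obj z \<le> obj (x 0)
        \<Longrightarrow> infdist z stationary \<le> \<tau> * norm (prox_grad z - z)"
    and delta: "\<delta> > 0"
    and separation: "\<And>u v. u \<in> stationary \<Longrightarrow> v \<in> stationary \<Longrightarrow> obj u \<noteq> obj v
        \<Longrightarrow> \<delta> \<le> norm (u - v)"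
    and stationary_nonempty: "stationary \<noteq> {}"
begin

definition extrap :: "nat \<Rightarrow> 'a" where
  "extrap k = x k + \<beta> k *\<^sub>R (x k - x (k - 1))"

text \<open>On \<open>nat\<close>, \<open>0 - 1 = 0\<close>, so \<open>step 0 = 0\<close>: this is the initialisation \<open>x\<^sup>-\<^sup>1 = x\<^sup>0\<close>.\<close>

definition step :: "nat \<Rightarrow> 'a" where
  "step k = x k - x (k - 1)"

definition lyap :: "nat \<Rightarrow> real" where
  "lyap k = obj (x k) + L / 2 * (norm (step k))\<^sup>2"

definition descent_const :: real where
  "descent_const = (L - (L + l) * b\<^sup>2) / 2"

lemma b_nonneg: "0 \<le> b"
  using beta[of 0] by simp

lemma b_le_1: "b \<le> 1"
proof -
  have "sqrt (L / (L + l)) \<le> 1" using L_pos l_nonneg by simp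
  then show ?thesis using b_less by linarith
qed

lemma descent_const_pos: "descent_const > 0"
proof -
  have "b\<^sup>2 < (sqrt (L / (L + l)))\<^sup>2" using b_nonneg b_less by (intro power_strict_mono) auto
  also have "\<dots> = L / (L + l)" using L_pos l_nonneg by simp
  finally have "(L + l) * b\<^sup>2 < L" using L_pos l_nonneg by (simp add: field_simps)
  then show ?thesis unfolding descent_const_def by simp
qed

lemma x_Suc: "x (Suc k) = prox_grad (extrap k)"
  unfolding extrap_def by (rule iter)

lemma step_Suc: "step (Suc k) = x (Suc k) - x k"
  unfolding step_def by simp

lemma x_in_dom: "g (x k) < \<infinity>"
  using x0_dom prox_grad_in_dom by (cases k) (simp_all add: x_Suc)

lemma norm_x_minus_extrap: "norm (x k - extrap k) \<le> b * norm (step k)"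
  using beta[of k] unfolding extrap_def step_def by (simp add: mult_right_mono)

lemma norm_x_minus_extrap_le_step: "norm (x k - extrap k) \<le> norm (step k)"
  using norm_x_minus_extrap[of k] b_le_1 mult_right_mono[OF b_le_1 norm_ge_zero[of "step k"]]
  by linarith

lemma lyap_descent: "lyap (Suc k) + descent_const * (norm (step k))\<^sup>2 \<le> lyap k"
proof -
  have "obj (x (Suc k))
      \<le> obj (x k) + (L + l) / 2 * (norm (x k - extrap k))\<^sup>2 - L / 2 * (norm (step (Suc k)))\<^sup>2"
    using obj_prox_grad_le[OF x_in_dom[of k], of "extrap k"]
    by (simp add: x_Suc step_Suc norm_minus_commute)
  moreover have "(norm (x k - extrap k))\<^sup>2 \<le> b\<^sup>2 * (norm (step k))\<^sup>2"
    using power_mono[OF norm_x_minus_extrap[of k] norm_ge_zero] by (simp add: power_mult_distrib)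
  then have "(L + l) / 2 * (norm (x k - extrap k))\<^sup>2 \<le> (L + l) / 2 * (b\<^sup>2 * (norm (step k))\<^sup>2)"
    using L_pos l_nonneg by (intro mult_left_mono) auto
  moreover have "(L + l) / 2 * (b\<^sup>2 * (norm (step k))\<^sup>2)
      = L / 2 * (norm (step k))\<^sup>2 - descent_const * (norm (step k))\<^sup>2"
    unfolding descent_const_def by (simp add: field_simps)
  ultimately show ?thesis unfolding lyap_def by linarith
qed

lemma decseq_lyap: "decseq lyap"
proof (rule decseq_SucI)
  fix k
  have "0 \<le> descent_const * (norm (step k))\<^sup>2" using descent_const_pos by simp
  then show "lyap (Suc k) \<le> lyap k" using lyap_descent[of k] by linarith
qed

lemma obj_le_lyap: "obj (x k) \<le> lyap k"
  unfolding lyap_def using L_pos by simp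

lemma obj_le_obj_x0: "obj (x k) \<le> obj (x 0)"
  using obj_le_lyap[of k] decseqD[OF decseq_lyap, of 0 k] by (simp add: lyap_def step_def)

lemma step_tendsto_0: "(\<lambda>k. norm (step k)) \<longlonglongrightarrow> 0"
proof -
  have "m \<le> lyap k" for k using obj_ge[OF x_in_dom] obj_le_lyap by (rule order_trans)
  then obtain h where h: "lyap \<longlonglongrightarrow> h" using decseq_convergent[OF decseq_lyap] by blast
  have "(\<lambda>k. lyap k - lyap (Suc k)) \<longlonglongrightarrow> h - h"
    by (intro tendsto_diff h LIMSEQ_Suc[OF h])
  then have lim: "(\<lambda>k. (lyap k - lyap (Suc k)) / descent_const) \<longlonglongrightarrow> 0"
    by (simp add: tendsto_divide_zero)
  have "(norm (step k))\<^sup>2 \<le> (lyap k - lyap (Suc k)) / descent_const" for k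
    using lyap_descent[of k] descent_const_pos by (simp add: field_simps)
  then have "\<forall>\<^sub>F k in sequentially. (norm (step k))\<^sup>2 \<le> (lyap k - lyap (Suc k)) / descent_const"
    by simp
  from tendsto_sandwich[OF _ this tendsto_const lim]
  have "(\<lambda>k. (norm (step k))\<^sup>2) \<longlonglongrightarrow> 0" by simp
  from tendsto_real_sqrt[OF this] show ?thesis by simp
qed

lemma residual_le: "norm (prox_grad (x k) - x k) \<le> 3 * norm (step k) + norm (step (Suc k))"
proof -
  have "norm (prox_grad (x k) - x (Suc k)) \<le> 3 * norm (x k - extrap k)"
    unfolding x_Suc by (rule prox_grad_lipschitz)
  also have "\<dots> \<le> 3 * norm (step k)" using norm_x_minus_extrap_le_step by simp
  finally show ?thesis
    using norm_triangle_ineq[of "prox_grad (x k) - x (Suc k)" "x (Suc k) - x k"]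
    unfolding step_Suc by simp
qed

lemma eventually_infdist_le:
  "\<exists>K. \<forall>k\<ge>K. infdist (x k) stationary \<le> \<tau> * (3 * norm (step k) + norm (step (Suc k)))"
proof -
  have "(\<lambda>k. 3 * norm (step k) + norm (step (Suc k))) \<longlonglongrightarrow> 3 * 0 + 0"
    by (intro tendsto_add tendsto_mult tendsto_const step_tendsto_0 LIMSEQ_Suc[OF step_tendsto_0])
  then obtain K where K: "\<And>k. k \<ge> K \<Longrightarrow> 3 * norm (step k) + norm (step (Suc k)) < \<epsilon>"
    using eps order_tendstoD(2)[of _ 0 sequentially \<epsilon>] unfolding eventually_sequentially by auto
  have "infdist (x k) stationary \<le> \<tau> * (3 * norm (step k) + norm (step (Suc k)))" if "k \<ge> K" for k
  proof -
    have "norm (prox_grad (x k) - x k) < \<epsilon>" using residual_le[of k] K[OF that] by linarith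
    then have "infdist (x k) stationary \<le> \<tau> * norm (prox_grad (x k) - x k)"
      using error_bound x_in_dom obj_le_obj_x0 by blast
    also have "\<dots> \<le> \<tau> * (3 * norm (step k) + norm (step (Suc k)))"
      using tau residual_le[of k] by (intro mult_left_mono) auto
    finally show ?thesis .
  qed
  then show ?thesis by blast
qed

lemma infdist_tendsto_0: "(\<lambda>k. infdist (x k) stationary) \<longlonglongrightarrow> 0"
proof -
  obtain K where K: "\<And>k. k \<ge> K
      \<Longrightarrow> infdist (x k) stationary \<le> \<tau> * (3 * norm (step k) + norm (step (Suc k)))"
    using eventually_infdist_le by blast
  have lim: "(\<lambda>k. \<tau> * (3 * norm (step k) + norm (step (Suc k)))) \<longlonglongrightarrow> \<tau> * (3 * 0 + 0)"
    by (intro tendsto_add tendsto_mult tendsto_const step_tendsto_0 LIMSEQ_Suc[OF step_tendsto_0])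
  have "\<forall>\<^sub>F k in sequentially.
      infdist (x k) stationary \<le> \<tau> * (3 * norm (step k) + norm (step (Suc k)))"
    unfolding eventually_sequentially using K by blast
  from tendsto_sandwich[OF _ this tendsto_const lim] show ?thesis by (simp add: infdist_nonneg)
qed

definition nearest :: "nat \<Rightarrow> 'a" where
  "nearest k = (SOME z. z \<in> stationary \<and> infdist (x k) stationary = dist (x k) z)"

lemma nearest: "nearest k \<in> stationary" "norm (x k - nearest k) = infdist (x k) stationary"
proof -
  have "\<exists>z. z \<in> stationary \<and> infdist (x k) stationary = dist (x k) z"
    using infdist_attains_inf[OF closed_stationary stationary_nonempty] by blast
  from someI_ex[OF this] show "nearest k \<in> stationary" "norm (x k - nearest k) = infdist (x k) stationary"
    unfolding nearest_def by (simp_all add: dist_norm)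
qed

text \<open>The nearest stationary points eventually move by less than \<open>\<delta>\<close>, so by the separation
  hypothesis they all lie at one level of the objective.\<close>

lemma eventually_obj_nearest_const: "\<exists>\<zeta> K. \<forall>k\<ge>K. obj (nearest k) = \<zeta>"
proof -
  define D where "D k = infdist (x k) stationary" for k
  have "(\<lambda>k. D (Suc k) + norm (step (Suc k)) + D k) \<longlonglongrightarrow> 0 + 0 + 0"
    unfolding D_def
    by (intro tendsto_add infdist_tendsto_0 LIMSEQ_Suc[OF infdist_tendsto_0] LIMSEQ_Suc[OF step_tendsto_0])
  then obtain K where K: "\<And>k. k \<ge> K \<Longrightarrow> D (Suc k) + norm (step (Suc k)) + D k < \<delta>"
    using delta order_tendstoD(2)[of _ 0 sequentially \<delta>] unfolding eventually_sequentially by auto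
  have step_eq: "obj (nearest (Suc k)) = obj (nearest k)" if "k \<ge> K" for k
  proof (rule ccontr)
    assume "obj (nearest (Suc k)) \<noteq> obj (nearest k)"
    then have "\<delta> \<le> norm (nearest (Suc k) - nearest k)" using separation nearest(1) by blast
    also have "nearest (Suc k) - nearest k
        = - (x (Suc k) - nearest (Suc k)) + step (Suc k) + (x k - nearest k)"
      unfolding step_Suc by simp
    also have "norm \<dots> \<le> norm (x (Suc k) - nearest (Suc k)) + norm (step (Suc k)) + norm (x k - nearest k)"
      using norm_triangle_ineq[of "- (x (Suc k) - nearest (Suc k)) + step (Suc k)" "x k - nearest k"]
        norm_triangle_ineq[of "- (x (Suc k) - nearest (Suc k))" "step (Suc k)"]
      by (simp add: norm_minus_commute[of "nearest (Suc k)"])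
    also have "\<dots> = D (Suc k) + norm (step (Suc k)) + D k" unfolding D_def nearest(2) ..
    finally show False using K[OF that] by simp
  qed
  have "obj (nearest k) = obj (nearest K)" if "k \<ge> K" for k
    using that by (induction k rule: dec_induct) (simp_all add: step_eq)
  then show ?thesis by blast
qed

lemma limit_stationary:
  assumes "x \<longlonglongrightarrow> z"
  shows "z \<in> stationary"
proof -
  have "(\<lambda>k. x k - extrap k) \<longlonglongrightarrow> 0"
  proof (rule tendsto_norm_zero_cancel)
    have "\<forall>\<^sub>F k in sequentially. norm (x k - extrap k) \<le> norm (step k)"
      using norm_x_minus_extrap_le_step by simp
    from tendsto_sandwich[OF _ this tendsto_const step_tendsto_0]
    show "(\<lambda>k. norm (x k - extrap k)) \<longlonglongrightarrow> 0" by simp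
  qed
  from tendsto_diff[OF assms this] have "extrap \<longlonglongrightarrow> z" by simp
  moreover have "continuous_on UNIV prox_grad"
    using prox_grad_lipschitz
    by (intro lipschitz_on_continuous_on[of 3] lipschitz_onI) (auto simp: dist_norm)
  ultimately have "(\<lambda>k. x (Suc k)) \<longlonglongrightarrow> prox_grad z"
    unfolding x_Suc by (intro continuous_on_tendsto_compose[of UNIV prox_grad]) auto
  with LIMSEQ_Suc[OF assms] have "prox_grad z = z" by (rule LIMSEQ_unique[rotated])
  then show ?thesis using stationary_iff_fixed_point by simp
qed

context
  fixes \<zeta> :: real and K :: nat
  assumes level: "\<And>k. K \<le> k \<Longrightarrow> obj (nearest k) = \<zeta>"
    and infdist_tail: "\<And>k. K \<le> k
      \<Longrightarrow> infdist (x k) stationary \<le> \<tau> * (3 * norm (step k) + norm (step (Suc k)))"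
begin

lemma obj_ge_level:
  "K \<le> k \<Longrightarrow> \<zeta> - l / 2 * (infdist (x k) stationary)\<^sup>2 \<le> obj (x k)"
  using obj_ge_at_stationary[OF nearest(1) x_in_dom, of k k] level[of k] nearest(2)[of k] by simp

lemma lyap_ge_level: "\<zeta> \<le> lyap k"
proof -
  have "(\<lambda>j. \<zeta> - l / 2 * (infdist (x j) stationary)\<^sup>2) \<longlonglongrightarrow> \<zeta> - l / 2 * 0\<^sup>2"
    by (intro tendsto_diff tendsto_mult tendsto_const tendsto_power infdist_tendsto_0)
  moreover have "\<forall>j\<ge>max k K. \<zeta> - l / 2 * (infdist (x j) stationary)\<^sup>2 \<le> lyap k"
  proof (intro allI impI)
    fix j assume "max k K \<le> j"
    then show "\<zeta> - l / 2 * (infdist (x j) stationary)\<^sup>2 \<le> lyap k"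
      using obj_ge_level[of j] obj_le_lyap[of j] decseqD[OF decseq_lyap, of k j] by simp
  qed
  ultimately have "\<zeta> - l / 2 * 0\<^sup>2 \<le> lyap k" by (intro LIMSEQ_le_const2) blast+
  then show ?thesis by simp
qed

lemma infdist_sq_le:
  assumes "K \<le> k"
  shows "(infdist (x k) stationary)\<^sup>2
    \<le> 18 * \<tau>\<^sup>2 * ((norm (step k))\<^sup>2 + (norm (step (Suc k)))\<^sup>2)"
proof -
  have "(infdist (x k) stationary)\<^sup>2 \<le> (\<tau> * (3 * norm (step k) + norm (step (Suc k))))\<^sup>2"
    using infdist_tail[OF assms] infdist_nonneg by (intro power_mono) auto
  also have "\<dots> = \<tau>\<^sup>2 * (3 * norm (step k) + norm (step (Suc k)))\<^sup>2"
    by (simp add: power_mult_distrib)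
  also have "\<dots> \<le> \<tau>\<^sup>2 * (18 * (norm (step k))\<^sup>2 + 2 * (norm (step (Suc k)))\<^sup>2)"
    using power2_add_le[of "3 * norm (step k)" "norm (step (Suc k))"]
    by (intro mult_left_mono) (simp_all add: power_mult_distrib)
  also have "\<dots> \<le> 18 * \<tau>\<^sup>2 * ((norm (step k))\<^sup>2 + (norm (step (Suc k)))\<^sup>2)"
    by (simp add: algebra_simps)
  finally show ?thesis .
qed

text \<open>The comparison point in the descent inequality of the proximal gradient step is the nearest
  stationary point.\<close>

lemma lyap_gap_le_steps:
  assumes "K \<le> k"
  shows "lyap (Suc k) - \<zeta>
    \<le> ((L + l) * (18 * \<tau>\<^sup>2 + 1) + L / 2) * ((norm (step k))\<^sup>2 + (norm (step (Suc k)))\<^sup>2)"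
proof -
  define S where "S = (norm (step k))\<^sup>2 + (norm (step (Suc k)))\<^sup>2"
  define u where "u = nearest k"
  have "obj (x (Suc k)) \<le> obj u + (L + l) / 2 * (norm (u - extrap k))\<^sup>2
      - L / 2 * (norm (u - x (Suc k)))\<^sup>2"
    using obj_prox_grad_le[OF stationary_in_dom[OF nearest(1)[of k]], of "extrap k"]
    unfolding u_def x_Suc .
  moreover have "0 \<le> L / 2 * (norm (u - x (Suc k)))\<^sup>2" using L_pos by simp
  moreover have "obj u = \<zeta>" unfolding u_def by (rule level[OF assms])
  moreover have "(norm (u - extrap k))\<^sup>2 \<le> 2 * (18 * \<tau>\<^sup>2 * S) + 2 * S"
  proof -
    have "norm (u - extrap k) \<le> infdist (x k) stationary + norm (step k)"
      using norm_triangle_ineq[of "u - x k" "x k - extrap k"] norm_x_minus_extrap_le_step[of k]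
        nearest(2)[of k] unfolding u_def by (simp add: norm_minus_commute)
    then have "(norm (u - extrap k))\<^sup>2 \<le> (infdist (x k) stationary + norm (step k))\<^sup>2"
      by (intro power_mono) auto
    also have "\<dots> \<le> 2 * (infdist (x k) stationary)\<^sup>2 + 2 * (norm (step k))\<^sup>2"
      by (rule power2_add_le)
    moreover have "(infdist (x k) stationary)\<^sup>2 \<le> 18 * \<tau>\<^sup>2 * S"
      using infdist_sq_le[OF assms] unfolding S_def .
    moreover have "(norm (step k))\<^sup>2 \<le> S" unfolding S_def by simp
    ultimately show ?thesis by linarith
  qed
  then have "(L + l) / 2 * (norm (u - extrap k))\<^sup>2 \<le> (L + l) / 2 * (2 * (18 * \<tau>\<^sup>2 * S) + 2 * S)"
    using L_pos l_nonneg by (intro mult_left_mono) auto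
  moreover have "(L + l) / 2 * (2 * (18 * \<tau>\<^sup>2 * S) + 2 * S) = (L + l) * (18 * \<tau>\<^sup>2 + 1) * S"
    by (simp add: field_simps)
  moreover have "L / 2 * (norm (step (Suc k)))\<^sup>2 \<le> L / 2 * S"
    unfolding S_def using L_pos by simp
  moreover have "((L + l) * (18 * \<tau>\<^sup>2 + 1) + L / 2) * S = (L + l) * (18 * \<tau>\<^sup>2 + 1) * S + L / 2 * S"
    by (simp add: algebra_simps)
  ultimately show ?thesis unfolding lyap_def S_def[symmetric] by linarith
qed

lemma lyap_gap_le_geometric:
  obtains C s where "0 < s" "s < 1" "\<And>k. lyap k - \<zeta> \<le> C * s ^ k"
proof -
  define A where "A = (L + l) * (18 * \<tau>\<^sup>2 + 1) + L / 2"
  have A: "A > 0" unfolding A_def using L_pos l_nonneg by (simp add: add_nonneg_pos)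
  define q where "q = A / (A + descent_const)"
  have q: "0 < q" "q < 1" unfolding q_def using A descent_const_pos by auto
  have contr: "lyap (k + 2) - \<zeta> \<le> q * (lyap k - \<zeta>)" if "K \<le> k" for k
  proof -
    have "descent_const * (lyap (Suc k) - \<zeta>)
        \<le> A * (descent_const * (norm (step k))\<^sup>2 + descent_const * (norm (step (Suc k)))\<^sup>2)"
      using mult_left_mono[OF lyap_gap_le_steps[OF that], of descent_const] descent_const_pos
      unfolding A_def by (simp add: algebra_simps)
    also have "\<dots> \<le> A * (lyap k - lyap (Suc (Suc k)))"
      using lyap_descent[of k] lyap_descent[of "Suc k"] A by (intro mult_left_mono) auto
    finally have "descent_const * (lyap (Suc k) - \<zeta>) \<le> A * (lyap k - lyap (Suc (Suc k)))" .
    moreover have "descent_const * (lyap (Suc (Suc k)) - \<zeta>) \<le> descent_const * (lyap (Suc k) - \<zeta>)"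
      using decseqD[OF decseq_lyap, of "Suc k" "Suc (Suc k)"] descent_const_pos by simp
    ultimately have "(A + descent_const) * (lyap (k + 2) - \<zeta>) \<le> A * (lyap k - \<zeta>)"
      by (simp add: algebra_simps)
    then show ?thesis unfolding q_def using A descent_const_pos by (simp add: field_simps)
  qed
  moreover have "decseq (\<lambda>k. lyap k - \<zeta>)" using decseq_lyap by (simp add: decseq_def)
  ultimately obtain C where "\<And>k. lyap k - \<zeta> \<le> C * sqrt q ^ k"
    using two_step_contraction_imp_le_geometric[OF q, of "\<lambda>k. lyap k - \<zeta>"] lyap_ge_level
    by force
  moreover have "0 < sqrt q" "sqrt q < 1" using q by auto
  ultimately show ?thesis using that by blast
qed

lemma abs_obj_minus_level_le:
  assumes "K \<le> k" and "z \<in> stationary"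
  shows "\<bar>obj (x k) - \<zeta>\<bar> \<le> (lyap k - \<zeta>) + l / 2 * (norm (x k - z))\<^sup>2"
proof -
  have "infdist (x k) stationary \<le> norm (x k - z)"
    using infdist_le[OF assms(2)] by (simp add: dist_norm)
  then have "l / 2 * (infdist (x k) stationary)\<^sup>2 \<le> l / 2 * (norm (x k - z))\<^sup>2"
    using l_nonneg infdist_nonneg by (intro mult_left_mono power_mono) auto
  moreover have "0 \<le> l / 2 * (norm (x k - z))\<^sup>2" using l_nonneg by simp
  ultimately show ?thesis
    using obj_ge_level[OF assms(1)] obj_le_lyap[of k] lyap_ge_level[of k]
    unfolding abs_le_iff by linarith
qed

lemma R_linear_at_level:
  "(\<exists>z\<in>stationary. limsup (\<lambda>k. ereal (root k (norm (x k - z)))) < 1)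
    \<and> limsup (\<lambda>k. ereal (root k \<bar>obj (x k) - \<zeta>\<bar>)) < 1"
proof -
  obtain C s where s: "0 < s" "s < 1" and gap: "\<And>k. lyap k - \<zeta> \<le> C * s ^ k"
    using lyap_gap_le_geometric by blast
  define \<rho> where "\<rho> = sqrt s"
  have \<rho>: "0 < \<rho>" "\<rho> < 1" "\<rho>\<^sup>2 = s" unfolding \<rho>_def using s by auto
  have steps: "norm (x (Suc k) - x k) \<le> sqrt (C / descent_const) * \<rho> ^ k" for k
  proof -
    have "descent_const * (norm (step (Suc k)))\<^sup>2 \<le> lyap (Suc k) - \<zeta>"
      using lyap_descent[of "Suc k"] lyap_ge_level[of "Suc (Suc k)"] by simp
    also have "\<dots> \<le> C * s ^ k"
      using decseqD[OF decseq_lyap, of k "Suc k"] gap[of k] by simp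
    finally have "(norm (step (Suc k)))\<^sup>2 \<le> C / descent_const * s ^ k"
      using descent_const_pos by (simp add: field_simps)
    from real_sqrt_le_mono[OF this]
    have "norm (step (Suc k)) \<le> sqrt (C / descent_const * s ^ k)" by simp
    also have "\<dots> = sqrt (C / descent_const) * \<rho> ^ k"
      unfolding \<rho>_def by (simp only: real_sqrt_mult real_sqrt_power)
    finally show ?thesis unfolding step_Suc .
  qed
  obtain z where z: "x \<longlonglongrightarrow> z"
    and dist_z: "\<And>k. norm (x k - z) \<le> sqrt (C / descent_const) / (1 - \<rho>) * \<rho> ^ k"
    using geometric_increments_imp_convergent[OF less_imp_le[OF \<rho>(1)] \<rho>(2) steps] by blast
  define C' where "C' = sqrt (C / descent_const) / (1 - \<rho>)"
  have "\<bar>obj (x k) - \<zeta>\<bar> \<le> (C + l / 2 * C'\<^sup>2) * s ^ k" if "K \<le> k" for k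
  proof -
    have "(norm (x k - z))\<^sup>2 \<le> (C' * \<rho> ^ k)\<^sup>2"
      using dist_z[of k] unfolding C'_def by (intro power_mono) auto
    also have "\<dots> = C'\<^sup>2 * (\<rho>\<^sup>2) ^ k"
      by (simp add: power_mult_distrib flip: power_mult) (simp add: mult.commute)
    finally have "l / 2 * (norm (x k - z))\<^sup>2 \<le> l / 2 * (C'\<^sup>2 * s ^ k)"
      using l_nonneg \<rho>(3) by (intro mult_left_mono) auto
    moreover have "(C + l / 2 * C'\<^sup>2) * s ^ k = C * s ^ k + l / 2 * (C'\<^sup>2 * s ^ k)"
      by (simp add: algebra_simps)
    ultimately show ?thesis
      using abs_obj_minus_level_le[OF that limit_stationary[OF z]] gap[of k] by linarith
  qed
  then have "\<exists>C''. \<forall>k. \<bar>obj (x k) - \<zeta>\<bar> \<le> C'' * s ^ k"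
    by (rule eventually_le_geometric_imp_le_geometric[OF s(1)])
  then obtain C'' where "\<And>k. \<bar>obj (x k) - \<zeta>\<bar> \<le> C'' * s ^ k" by blast
  from le_geometric_imp_limsup_root_less_1[OF abs_ge_zero this s]
    le_geometric_imp_limsup_root_less_1[OF norm_ge_zero dist_z \<rho>(1,2)] limit_stationary[OF z]
  show ?thesis by blast
qed

end

lemma R_linear_convergence:
  "(\<exists>z\<in>stationary. limsup (\<lambda>k. ereal (root k (norm (x k - z)))) < 1)
    \<and> (\<exists>\<zeta>. limsup (\<lambda>k. ereal (root k \<bar>obj (x k) - \<zeta>\<bar>)) < 1)"
proof -
  obtain \<zeta> K1 where K1: "\<And>k. K1 \<le> k \<Longrightarrow> obj (nearest k) = \<zeta>"
    using eventually_obj_nearest_const by blast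
  obtain K2 where K2: "\<And>k. K2 \<le> k
      \<Longrightarrow> infdist (x k) stationary \<le> \<tau> * (3 * norm (step k) + norm (step (Suc k)))"
    using eventually_infdist_le by blast
  have "\<And>k. max K1 K2 \<le> k \<Longrightarrow> obj (nearest k) = \<zeta>"
    "\<And>k. max K1 K2 \<le> k \<Longrightarrow> infdist (x k) stationary \<le> \<tau> * (3 * norm (step k) + norm (step (Suc k)))"
    using K1 K2 by simp_all
  from R_linear_at_level[OF this] show ?thesis by blast
qed

end

theorem theorem3p7:
  fixes g :: "'a::euclidean_space \<Rightarrow> ereal"
    and f1 f2 :: "'a \<Rightarrow> real"
    and df1 df2 :: "'a \<Rightarrow> 'a"
    and L l :: real
    and x :: "nat \<Rightarrow> 'a"
    and \<beta> :: "nat \<Rightarrow> real"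
  defines "F \<equiv> (\<lambda>z. ereal (f1 z - f2 z) + g z)"
    and "gradf \<equiv> (\<lambda>z. df1 z - df2 z)"
    and "Xstat \<equiv> {z. - (df1 z - df2 z) \<in> subdiff g z}"
  assumes g_proper: "proper_fun g" and g_closed: "closed_efun g" and g_convex: "convex_efun g"
    and f1_convex: "convex_on UNIV f1" and f2_convex: "convex_on UNIV f2"
    and f1_grad: "\<And>z. (f1 has_derivative (\<lambda>h. df1 z \<bullet> h)) (at z)"
    and f2_grad: "\<And>z. (f2 has_derivative (\<lambda>h. df2 z \<bullet> h)) (at z)"
    and L_pos: "L > 0" and l_nonneg: "l \<ge> 0" and L_ge_l: "L \<ge> l"
    and f1_lip: "\<And>u v. norm (df1 u - df1 v) \<le> L * norm (u - v)"
    and f2_lip: "\<And>u v. norm (df2 u - df2 v) \<le> l * norm (u - v)"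
    and inf_bounded: "Inf (range F) > -\<infinity>"
    and inf_attained: "\<exists>z0. \<forall>z. F z0 \<le> F z"
    and error_bound: "\<And>\<xi>::real. ereal \<xi> \<ge> Inf (range F) \<Longrightarrow>
          \<exists>\<epsilon>>0. \<exists>\<tau>>0. \<forall>z. norm (prox (1/L) g (z - (1/L) *\<^sub>R gradf z) - z) < \<epsilon> \<and> F z \<le> ereal \<xi>
              \<longrightarrow> infdist z Xstat \<le> \<tau> * norm (prox (1/L) g (z - (1/L) *\<^sub>R gradf z) - z)"
    and separation: "\<exists>\<delta>>0. \<forall>u\<in>Xstat. \<forall>v\<in>Xstat. F u \<noteq> F v \<longrightarrow> norm (u - v) \<ge> \<delta>"
    and x0_dom: "g (x 0) < \<infinity>"
    and beta_range: "\<And>k. 0 \<le> \<beta> k \<and> \<beta> k \<le> sqrt (L / (L + l))"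
    and beta_sup: "\<exists>b < sqrt (L / (L + l)). \<forall>k. \<beta> k \<le> b"
    and iter: "\<And>k. x (Suc k) = prox (1/L) g
                 ((x k + \<beta> k *\<^sub>R (x k - x (k - 1)))
                  - (1/L) *\<^sub>R gradf (x k + \<beta> k *\<^sub>R (x k - x (k - 1))))"
  shows "(\<exists>xs\<in>Xstat. limsup (\<lambda>k. ereal (root k (norm (x k - xs)))) < 1)
       \<and> (\<forall>k. F (x k) < \<infinity>)
       \<and> (\<exists>\<zeta>::real. limsup (\<lambda>k. ereal (root k \<bar>real_of_ereal (F (x k)) - \<zeta>\<bar>)) < 1)"
proof -
  obtain m :: real where m: "ereal m \<le> Inf (range F)"
    using inf_bounded by (cases "Inf (range F)") auto
  interpret dc_composite g f1 f2 df1 df2 L l m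
    using g_proper g_closed g_convex f1_convex f2_convex f1_grad f2_grad L_pos l_nonneg L_ge_l
      f1_lip f2_lip order_trans[OF m Inf_lower[OF rangeI]]
    unfolding F_def by unfold_locales auto
  have F_obj: "F z = ereal (obj z)" if "g z < \<infinity>" for z
    unfolding F_def using that by (rule ereal_obj)
  have Xstat: "Xstat = stationary"
    unfolding Xstat_def stationary_def grad_f_def ..
  have prox: "prox (1/L) g (z - (1/L) *\<^sub>R gradf z) = prox_grad z" for z
    unfolding prox_grad_def grad_f_def gradf_def ..
  obtain b where b: "b < sqrt (L / (L + l))" "\<And>k. \<beta> k \<le> b" using beta_sup by blast
  have "Inf (range F) \<le> ereal (obj (x 0))" using Inf_lower[OF rangeI, of F "x 0"] F_obj[OF x0_dom] by simp
  then obtain \<epsilon> \<tau> where "\<epsilon> > 0" "\<tau> > 0"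
    and eb: "\<And>z. norm (prox_grad z - z) < \<epsilon> \<and> F z \<le> ereal (obj (x 0))
      \<Longrightarrow> infdist z stationary \<le> \<tau> * norm (prox_grad z - z)"
    using error_bound[of "obj (x 0)"] unfolding prox Xstat by blast
  obtain \<delta> where "\<delta> > 0"
    and sep: "\<And>u v. u \<in> stationary \<Longrightarrow> v \<in> stationary \<Longrightarrow> F u \<noteq> F v \<Longrightarrow> \<delta> \<le> norm (u - v)"
    using separation unfolding Xstat by blast
  obtain z0 where "\<And>z. F z0 \<le> F z" using inf_attained by blast
  then have "stationary \<noteq> {}" using ereal_minimizer_stationary unfolding F_def by blast
  interpret inertial_prox_grad g f1 f2 df1 df2 L l m x \<beta> b \<epsilon> \<tau> \<delta>
  proof unfold_locales
    show "0 \<le> \<beta> k \<and> \<beta> k \<le> b" for k using beta_range[of k] b(2)[of k] by simp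
    show "x (Suc k) = prox_grad (x k + \<beta> k *\<^sub>R (x k - x (k - 1)))" for k
      using iter[of k] unfolding prox .
    show "infdist z stationary \<le> \<tau> * norm (prox_grad z - z)"
      if "norm (prox_grad z - z) < \<epsilon>" "g z < \<infinity>" "obj z \<le> obj (x 0)" for z
      using eb[of z] that F_obj[OF that(2)] by simp
    show "\<delta> \<le> norm (u - v)" if "u \<in> stationary" "v \<in> stationary" "obj u \<noteq> obj v" for u v
      using sep[OF that(1,2)] that(3) F_obj stationary_in_dom[OF that(1)] stationary_in_dom[OF that(2)]
      by force
  qed fact+
  show ?thesis
    using R_linear_convergence x_in_dom F_obj[OF x_in_dom] unfolding Xstat by simp
qed

end
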